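(* Let $\{G_n\}_{n\ge1}$ be a centered Gaussian sequence with $E[G_n^2]=1$ for all $n$ (jointly Gaussian). If $$\sum_{n\geq 2}\frac{1}{n\log^3 n}\sum_{k,l=1}^n\frac{|E(G_kG_l)|}{kl}<\infty,$$ then almost surely, for every continuous and bounded $\varphi:\mathbb R\to\mathbb R$, $$\frac{1}{\log n}\sum_{k=1}^n\frac1k\,\varphi(G_k)\longrightarrow E[\varphi(N)]\quad\text{as }n\to\infty,$$ where $N\sim\mathscr N(0,1)$. *)

theory Defs
  imports "HOL-Probability.Probability"
begin

definition gaussian_rv :: "'a measure \<Rightarrow> ('a \<Rightarrow> real) \<Rightarrow> bool" where
  "gaussian_rv M X \<longleftrightarrow> X \<in> borel_measurable M \<and>
     ((\<exists>c. AE x in M. X x = c) \<or>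
      (\<exists>\<mu> \<sigma>. \<sigma> > 0 \<and> distributed M lborel X (\<lambda>x. ennreal (normal_density \<mu> \<sigma> x))))"

definition jointly_gaussian :: "'a measure \<Rightarrow> (nat \<Rightarrow> 'a \<Rightarrow> real) \<Rightarrow> bool" where
  "jointly_gaussian M G \<longleftrightarrow>
     (\<forall>I c. finite I \<longrightarrow> I \<subseteq> {1..} \<longrightarrow> gaussian_rv M (\<lambda>x. \<Sum>i\<in>I. c i * G i x))"

end

theory Submission
  imports Defs
begin

text \<open>
  The proof has three layers.
  (1) A Tauberian lemma for real sequences: if T decreases at most like c log and
      sum T(n)^2/(n log^3 n) converges, then T(n) = o(log n).
  (2) A logarithmic strong law of large numbers: applied to T(n) = sum_{k<=n} (Y_k - m)/k, the
      second-moment bound E T(n)^2 <= C sum_{k,l<=n} |rho(k,l)|/(k l) makes the series of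
      E T(n)^2/(n log^3 n) summable, so the series converges almost surely and (1) applies.
  (3) For Gaussian sequences, the observables cos(t G_k), sin(t G_k) and G_k^2 have covariances
      bounded by a constant times |E(G_k G_l)|, so (2) gives their almost sure logarithmic laws
      (for all rational t simultaneously).  A deterministic argument via characteristic
      functions and the Levy continuity theorem then yields the conclusion for all bounded
      continuous functions.
\<close>

lemma inverse_le_ln_diff:
  assumes "2 \<le> k"
  shows "1 / real k \<le> ln (real k) - ln (real k - 1)"
proof -
  have "ln ((real k - 1) / real k) \<le> (real k - 1) / real k - 1"
    using assms by (intro ln_le_minus_one) auto
  moreover have "ln ((real k - 1) / real k) = ln (real k - 1) - ln (real k)"
    using assms by (subst ln_div) auto
  moreover have "(real k - 1) / real k - 1 = - (1 / real k)"
    using assms by (simp add: field_simps)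
  ultimately show ?thesis by linarith
qed

lemma sum_inverse_le_ln_diff:
  assumes "1 \<le> N" "N \<le> n"
  shows "(\<Sum>k\<in>{N<..n}. 1 / real k) \<le> ln (real n) - ln (real N)"
  using assms(2)
proof (induction n rule: dec_induct)
  case base
  then show ?case by simp
next
  case (step n)
  have "{N<..Suc n} = insert (Suc n) {N<..n}"
    using step.hyps by auto
  then have "(\<Sum>k\<in>{N<..Suc n}. 1 / real k) = 1 / real (Suc n) + (\<Sum>k\<in>{N<..n}. 1 / real k)"
    by simp
  also have "1 / real (Suc n) \<le> ln (real (Suc n)) - ln (real (Suc n) - 1)"
    using step.hyps assms(1) by (intro inverse_le_ln_diff) auto
  finally show ?case using step.IH by simp
qed

lemma ln_diff_le_sum_inverse:
  assumes "1 \<le> A" "A \<le> B"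
  shows "ln (real B + 1) - ln (real A) \<le> (\<Sum>k\<in>{A..B}. 1 / real k)"
  using assms(2)
proof (induction B rule: dec_induct)
  case base
  then show ?case using ln_diff_le_inverse[of "real A"] assms(1) by simp
next
  case (step n)
  have "{A..Suc n} = insert (Suc n) {A..n}"
    using step.hyps by auto
  then have "(\<Sum>k\<in>{A..Suc n}. 1 / real k) = 1 / real (Suc n) + (\<Sum>k\<in>{A..n}. 1 / real k)"
    by simp
  moreover have "ln (real (Suc n) + 1) - ln (real (Suc n)) \<le> 1 / real (Suc n)"
    using ln_diff_le_inverse[of "real (Suc n)"] by simp
  moreover have "real (Suc n) = real n + 1"
    by simp
  ultimately show ?case using step.IH by (simp only:)
qed

lemma harm_over_ln: "(\<lambda>n. harm n / ln (real n) :: real) \<longlonglongrightarrow> 1"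
proof -
  have "filterlim (\<lambda>n. ln (real n)) at_infinity sequentially"
    by (intro filterlim_at_top_imp_at_infinity filterlim_compose[OF ln_at_top filterlim_real_sequentially])
  then have "(\<lambda>n. 1 + (harm n - ln (real n)) / ln (real n) :: real) \<longlonglongrightarrow> 1 + 0"
    by (intro tendsto_add tendsto_const tendsto_divide_0[OF euler_mascheroni_LIMSEQ])
  moreover have "eventually (\<lambda>n. 1 + (harm n - ln (real n)) / ln (real n) = harm n / ln (real n)) sequentially"
    using eventually_ge_at_top[of 2] by eventually_elim (auto simp: field_simps)
  ultimately show ?thesis by (simp add: tendsto_cong)
qed

lemma log_average_iff_harmonic_average:
  "(\<lambda>n. (1 / ln (real n)) * (\<Sum>k=1..n. f k / real k)) \<longlonglongrightarrow> L \<longleftrightarrow>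
   (\<lambda>n. (\<Sum>k=1..n. f k / real k) / harm n) \<longlonglongrightarrow> L"
proof -
  let ?S = "\<lambda>n. \<Sum>k=1..n. f k / real k"
  have pos: "eventually (\<lambda>n. harm n > (0::real) \<and> ln (real n) > 0) sequentially"
    using eventually_ge_at_top[of 2] by eventually_elim (auto intro: harm_pos)
  have eq: "eventually (\<lambda>n. (1 / ln (real n)) * ?S n = ?S n / harm n * (harm n / ln (real n))) sequentially"
    using pos by eventually_elim (auto simp: field_simps simp del: harm_pos_iff)
  have eq': "eventually (\<lambda>n. ?S n / harm n = (1 / ln (real n)) * ?S n / (harm n / ln (real n))) sequentially"
    using pos by eventually_elim (auto simp: field_simps simp del: harm_pos_iff)
  show ?thesis
  proof
    assume "(\<lambda>n. (1 / ln (real n)) * ?S n) \<longlonglongrightarrow> L"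
    then have "(\<lambda>n. (1 / ln (real n)) * ?S n / (harm n / ln (real n))) \<longlonglongrightarrow> L / 1"
      by (intro tendsto_divide harm_over_ln) auto
    then show "(\<lambda>n. ?S n / harm n) \<longlonglongrightarrow> L" using tendsto_cong[OF eq'] by simp
  next
    assume "(\<lambda>n. ?S n / harm n) \<longlonglongrightarrow> L"
    then have "(\<lambda>n. ?S n / harm n * (harm n / ln (real n))) \<longlonglongrightarrow> L * 1"
      by (intro tendsto_mult harm_over_ln)
    then show "(\<lambda>n. (1 / ln (real n)) * ?S n) \<longlonglongrightarrow> L" using tendsto_cong[OF eq] by simp
  qed
qed

definition log_cube_weight :: "(nat \<Rightarrow> real) \<Rightarrow> nat \<Rightarrow> real" where
  "log_cube_weight T n = (if 2 \<le> n then (T n)^2 / (real n * ln (real n) ^ 3) else 0)"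

lemma log_cube_weight_nonneg: "0 \<le> log_cube_weight T n"
  by (simp add: log_cube_weight_def)

lemma window_weight_bound:
  assumes A: "2 \<le> A" and \<Lambda>: "0 < \<Lambda>" and h: "0 \<le> h"
    and large: "\<And>n. n \<in> {A..B} \<Longrightarrow> h \<le> \<bar>T n\<bar>"
    and ln_le: "\<And>n. n \<in> {A..B} \<Longrightarrow> ln (real n) \<le> \<Lambda>"
  shows "h^2 / \<Lambda>^3 * (\<Sum>n\<in>{A..B}. 1 / real n) \<le> (\<Sum>n\<in>{A..B}. log_cube_weight T n)"
  unfolding sum_distrib_left
proof (rule sum_mono)
  fix n assume n: "n \<in> {A..B}"
  then have n2: "2 \<le> n" and ln_pos: "0 < ln (real n)"
    using A by auto
  have "ln (real n) ^ 3 \<le> \<Lambda> ^ 3"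
    using ln_pos ln_le[OF n] by (intro power_mono) auto
  have "h^2 \<le> (T n)^2"
    using large[OF n] h by (metis power2_abs power_mono)
  have "h^2 / \<Lambda>^3 * (1 / real n) = h^2 / (real n * \<Lambda>^3)"
    by simp
  also have "\<dots> \<le> (T n)^2 / (real n * \<Lambda>^3)"
    using \<open>h^2 \<le> (T n)^2\<close> n2 \<Lambda> by (intro divide_right_mono) auto
  also have "\<dots> \<le> (T n)^2 / (real n * ln (real n)^3)"
    using n2 ln_pos \<Lambda> \<open>ln (real n) ^ 3 \<le> \<Lambda> ^ 3\<close>
    by (intro divide_left_mono mult_left_mono mult_pos_pos) auto
  finally show "h^2 / \<Lambda>^3 * (1 / real n) \<le> log_cube_weight T n"
    using n2 by (simp add: log_cube_weight_def)
qed

lemma forward_log_window: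
  assumes N: "1 \<le> N" and \<delta>: "0 < \<delta>"
  obtains B where "N \<le> B" "ln (real B) \<le> (1 + \<delta>) * ln (real N)"
    "\<delta> * ln (real N) \<le> (\<Sum>n\<in>{N..B}. 1 / real n)"
proof
  define L where "L = ln (real N)"
  define B where "B = nat \<lfloor>exp ((1 + \<delta>) * L)\<rfloor>"
  have L: "0 \<le> L" "exp L = real N"
    using N by (auto simp: L_def)
  have "real B = of_int \<lfloor>exp ((1 + \<delta>) * L)\<rfloor>"
    unfolding B_def by simp
  then have B: "real B \<le> exp ((1 + \<delta>) * L)" "exp ((1 + \<delta>) * L) < real B + 1"
    using of_int_floor_le real_of_int_floor_add_one_gt by linarith+
  have "L \<le> (1 + \<delta>) * L"
    using L \<delta> by (simp add: algebra_simps)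
  then have "exp L \<le> exp ((1 + \<delta>) * L)"
    by simp
  then have "real N \<le> exp ((1 + \<delta>) * L)"
    unfolding L(2) .
  then show NB: "N \<le> B"
    unfolding B_def by (simp add: le_nat_floor)
  have "ln (real B) \<le> ln (exp ((1 + \<delta>) * L))"
    using B NB N by (subst ln_le_cancel_iff) auto
  then show "ln (real B) \<le> (1 + \<delta>) * L"
    by simp
  have "ln (exp ((1 + \<delta>) * L)) < ln (real B + 1)"
    using B by (subst ln_less_cancel_iff) auto
  then show "\<delta> * L \<le> (\<Sum>n\<in>{N..B}. 1 / real n)"
    using ln_diff_le_sum_inverse[OF N NB] by (simp add: L_def algebra_simps)
qed

lemma backward_log_window:
  assumes N: "1 \<le> N" and \<delta>: "0 < \<delta>" "\<delta> \<le> 1/2"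
    and large: "2 * ln 2 \<le> \<delta> * ln (real N)"
  obtains A where "2 \<le> A" "A \<le> N" "(1 - \<delta>) * ln (real N) \<le> ln (real A)"
    "\<delta> * ln (real N) / 2 \<le> (\<Sum>n\<in>{A..N}. 1 / real n)"
proof
  define L where "L = ln (real N)"
  define E where "E = exp ((1 - \<delta>) * L)"
  define A where "A = nat \<lceil>E\<rceil>"
  have L: "0 \<le> L" "exp L = real N"
    using N by (auto simp: L_def)
  have "real A = of_int \<lceil>E\<rceil>"
    unfolding A_def E_def by simp
  then have A: "E \<le> real A" "real A < E + 1"
    using le_of_int_ceiling[of E] of_int_ceiling_le_add_one[of E] ceiling_correct[of E] by linarith+
  have "\<delta> * L \<le> (1 - \<delta>) * L"
    using \<delta> L by (intro mult_right_mono) auto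
  then have "ln 2 \<le> (1 - \<delta>) * L"
    using large ln_ge_zero[of 2] unfolding L_def by linarith
  then have "exp (ln 2) \<le> E"
    unfolding E_def by (simp only: exp_le_cancel_iff)
  then have E2: "2 \<le> E"
    by simp
  then show "2 \<le> A"
    using A by linarith
  have "(1 - \<delta>) * L \<le> L"
    using \<delta> L by (simp add: algebra_simps)
  then have "E \<le> exp L"
    unfolding E_def by (simp only: exp_le_cancel_iff)
  then show "A \<le> N"
    unfolding A_def using L by (simp add: nat_ceiling_le_eq)
  have "ln E \<le> ln (real A)"
    using A E2 by (subst ln_le_cancel_iff) auto
  then show lnA: "(1 - \<delta>) * L \<le> ln (real A)"
    by (simp add: E_def)
  have "ln (real A) \<le> ln (2 * E)"
    using A E2 by (subst ln_le_cancel_iff) auto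
  then have "ln (real A) \<le> ln 2 + (1 - \<delta>) * L"
    using E2 by (simp add: ln_mult E_def)
  moreover have "L \<le> ln (real N + 1)"
    using N by (simp add: L_def)
  moreover have "ln (real N + 1) - ln (real A) \<le> (\<Sum>n\<in>{A..N}. 1 / real n)"
    using ln_diff_le_sum_inverse \<open>2 \<le> A\<close> \<open>A \<le> N\<close> by simp
  ultimately show "\<delta> * L / 2 \<le> (\<Sum>n\<in>{A..N}. 1 / real n)"
    using large unfolding L_def by (simp add: algebra_simps)
qed

text \<open>An upward excursion T(N) >= epsilon log N persists, by the slow-decrease condition, on a block
  {N..B} and forces a fixed amount of weight on that block.\<close>

lemma upward_excursion_weight:
  assumes c: "0 \<le> c"
    and decr: "\<And>N n. 1 \<le> N \<Longrightarrow> N \<le> n \<Longrightarrow> T N - c * (ln (real n) - ln (real N)) \<le> T n"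
    and \<delta>: "0 < \<delta>" "\<delta> \<le> 1/2" "c * \<delta> \<le> \<epsilon> / 2" and \<epsilon>: "0 < \<epsilon>"
    and N: "2 \<le> N" and exc: "\<epsilon> * ln (real N) \<le> T N"
  obtains B where "N \<le> B" "\<epsilon>^2 * \<delta> / 32 \<le> (\<Sum>n\<in>{N..B}. log_cube_weight T n)"
proof -
  define L where "L = ln (real N)"
  have L: "0 < L"
    using N by (simp add: L_def)
  obtain B where NB: "N \<le> B" and lnB: "ln (real B) \<le> (1 + \<delta>) * L"
    and S: "\<delta> * L \<le> (\<Sum>n\<in>{N..B}. 1 / real n)"
    using forward_log_window[of N \<delta>] N \<delta> unfolding L_def by auto
  have ln_n: "ln (real n) \<le> (1 + \<delta>) * L" if n: "n \<in> {N..B}" for n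
  proof -
    have "ln (real n) \<le> ln (real B)"
      using n N by (subst ln_le_cancel_iff) auto
    then show ?thesis
      using lnB by linarith
  qed
  have "\<epsilon> * L / 2 \<le> \<bar>T n\<bar>" if n: "n \<in> {N..B}" for n
  proof -
    have "c * (ln (real n) - L) \<le> c * (\<delta> * L)"
      using ln_n[OF n] c by (intro mult_left_mono) (auto simp: algebra_simps)
    also have "\<dots> \<le> \<epsilon> / 2 * L"
      using mult_right_mono[OF \<delta>(3), of L] L by (simp add: mult.assoc)
    finally show ?thesis
      using decr[of N n] n N exc unfolding L_def by auto
  qed
  then have window: "(\<epsilon> * L / 2)^2 / ((1 + \<delta>) * L)^3 * (\<Sum>n\<in>{N..B}. 1 / real n)
      \<le> (\<Sum>n\<in>{N..B}. log_cube_weight T n)"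
    using N L \<delta> \<epsilon> ln_n by (intro window_weight_bound) auto
  define D where "D = (1 + \<delta>)^3"
  have D: "0 < D" "D \<le> 2^3"
    unfolding D_def using \<delta> by (simp, intro power_mono) auto
  then have "\<epsilon>^2 * \<delta> / 32 \<le> \<epsilon>^2 * \<delta> / (4 * D)"
    using \<delta> \<epsilon> by (intro divide_left_mono) auto
  also have "\<dots> = (\<epsilon> * L / 2)^2 / (D * L^3) * (\<delta> * L)"
    using L D by (simp add: field_simps power2_eq_square power3_eq_cube)
  also have "\<dots> = (\<epsilon> * L / 2)^2 / ((1 + \<delta>) * L)^3 * (\<delta> * L)"
    by (simp add: D_def power_mult_distrib)
  also have "\<dots> \<le> (\<epsilon> * L / 2)^2 / ((1 + \<delta>) * L)^3 * (\<Sum>n\<in>{N..B}. 1 / real n)"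
    using S L \<delta> by (intro mult_left_mono) auto
  also note window
  finally show thesis
    using that NB by blast
qed

text \<open>Symmetrically, a downward excursion T(N) <= - epsilon log N is preceded by a block {A..N}
  on which T is very negative, again forcing a fixed amount of weight.\<close>

lemma downward_excursion_weight:
  assumes c: "0 \<le> c"
    and decr: "\<And>N n. 1 \<le> N \<Longrightarrow> N \<le> n \<Longrightarrow> T N - c * (ln (real n) - ln (real N)) \<le> T n"
    and \<delta>: "0 < \<delta>" "\<delta> \<le> 1/2" "c * \<delta> \<le> \<epsilon> / 2" and \<epsilon>: "0 < \<epsilon>"
    and N: "1 \<le> N" and large: "2 * ln 2 \<le> \<delta> * ln (real N)" and exc: "T N \<le> - (\<epsilon> * ln (real N))"
  obtains A where "2 \<le> A" "(1 - \<delta>) * ln (real N) \<le> ln (real A)"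
    "\<epsilon>^2 * \<delta> / 32 \<le> (\<Sum>n\<in>{A..N}. log_cube_weight T n)"
proof -
  define L where "L = ln (real N)"
  have "0 < \<delta> * L"
    using large ln_gt_zero[of 2] unfolding L_def by linarith
  then have L: "0 < L"
    using \<delta> by (simp add: zero_less_mult_iff)
  obtain A where A: "2 \<le> A" "A \<le> N" and lnA: "(1 - \<delta>) * L \<le> ln (real A)"
    and S: "\<delta> * L / 2 \<le> (\<Sum>n\<in>{A..N}. 1 / real n)"
    using backward_log_window[OF N \<delta>(1,2) large] unfolding L_def by blast
  have ln_n: "(1 - \<delta>) * L \<le> ln (real n)" "ln (real n) \<le> L" if n: "n \<in> {A..N}" for n
  proof -
    have "ln (real A) \<le> ln (real n)" "ln (real n) \<le> ln (real N)"
      using n A by (subst ln_le_cancel_iff; auto)+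
    then show "(1 - \<delta>) * L \<le> ln (real n)" "ln (real n) \<le> L"
      using lnA unfolding L_def by linarith+
  qed
  have "\<epsilon> * L / 2 \<le> \<bar>T n\<bar>" if n: "n \<in> {A..N}" for n
  proof -
    have "c * (L - ln (real n)) \<le> c * (\<delta> * L)"
      using ln_n(1)[OF n] c by (intro mult_left_mono) (auto simp: algebra_simps)
    also have "\<dots> \<le> \<epsilon> / 2 * L"
      using mult_right_mono[OF \<delta>(3), of L] L by (simp add: mult.assoc)
    finally show ?thesis
      using decr[of n N] n A exc unfolding L_def by auto
  qed
  then have window: "(\<epsilon> * L / 2)^2 / L^3 * (\<Sum>n\<in>{A..N}. 1 / real n)
      \<le> (\<Sum>n\<in>{A..N}. log_cube_weight T n)"
    using A L \<epsilon> ln_n by (intro window_weight_bound) auto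
  have "\<epsilon>^2 * \<delta> / 32 \<le> \<epsilon>^2 * \<delta> / 8"
    using \<delta> \<epsilon> by (intro divide_left_mono) auto
  also have "\<dots> = (\<epsilon> * L / 2)^2 / L^3 * (\<delta> * L / 2)"
    using L by (simp add: field_simps power2_eq_square power3_eq_cube)
  also have "\<dots> \<le> (\<epsilon> * L / 2)^2 / L^3 * (\<Sum>n\<in>{A..N}. 1 / real n)"
    using S L by (intro mult_left_mono) auto
  also note window
  finally show thesis
    using that A lnA unfolding L_def by blast
qed

lemma summable_tail_small:
  fixes f :: "nat \<Rightarrow> real"
  assumes "summable f" "0 < \<epsilon>"
  obtains N0 where "\<And>p q. N0 \<le> p \<Longrightarrow> (\<Sum>n\<in>{p..q}. f n) < \<epsilon>"
proof -
  obtain N0 where "\<And>p q. N0 \<le> p \<Longrightarrow> norm (\<Sum>n\<in>{p..<q}. f n) < \<epsilon>"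
    using assms unfolding summable_Cauchy by blast
  then show thesis
    using that[of N0] atLeastLessThanSuc_atLeastAtMost by (metis real_norm_def abs_less_iff)
qed

text \<open>Since the tails of a convergent series are small, excursions of size epsilon log N cannot occur
  for large N.\<close>

lemma log_cube_tauberian:
  assumes c: "0 \<le> c"
    and decr: "\<And>N n. 1 \<le> N \<Longrightarrow> N \<le> n \<Longrightarrow> T N - c * (ln (real n) - ln (real N)) \<le> T n"
    and summ: "summable (log_cube_weight T)"
  shows "(\<lambda>n. T n / ln (real n)) \<longlonglongrightarrow> 0"
  unfolding tendsto_iff
proof (intro allI impI)
  fix \<epsilon> :: real assume \<epsilon>: "0 < \<epsilon>"
  define \<delta> where "\<delta> = min (1/2) (\<epsilon> / (2 * (c + 1)))"
  have \<delta>: "0 < \<delta>" "\<delta> \<le> 1/2"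
    using \<epsilon> c unfolding \<delta>_def by (auto simp: min_def)
  have "c * \<delta> \<le> (c + 1) * (\<epsilon> / (2 * (c + 1)))"
    using c \<delta> unfolding \<delta>_def by (intro mult_mono) auto
  also have "\<dots> = \<epsilon> / 2"
    using c by (simp add: field_simps)
  finally have c\<delta>: "c * \<delta> \<le> \<epsilon> / 2" .
  define \<kappa> where "\<kappa> = \<epsilon>^2 * \<delta> / 32"
  have "0 < \<kappa>"
    using \<epsilon> \<delta> by (simp add: \<kappa>_def)
  then obtain N0 where tail: "\<And>p q. N0 \<le> p \<Longrightarrow> (\<Sum>n\<in>{p..q}. log_cube_weight T n) < \<kappa>"
    using summable_tail_small[OF summ] by blast
  have ln_large: "\<forall>\<^sub>F N in sequentially. X \<le> ln (real N)" for X
    using filterlim_compose[OF ln_at_top filterlim_real_sequentially] by (simp add: filterlim_at_top)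
  show "\<forall>\<^sub>F N in sequentially. dist (T N / ln (real N)) 0 < \<epsilon>"
    using eventually_ge_at_top[of "max N0 2"] ln_large[of "2 * ln 2 / \<delta>"]
      ln_large[of "ln (real N0 + 1) / (1 - \<delta>)"]
  proof eventually_elim
    case (elim N)
    define L where "L = ln (real N)"
    have N: "N0 \<le> N" "2 \<le> N" and L: "0 < L"
      using elim by (auto simp: L_def)
    have large: "2 * ln 2 \<le> \<delta> * L" and large': "ln (real N0 + 1) \<le> (1 - \<delta>) * L"
      using elim \<delta> by (auto simp: L_def pos_divide_le_eq mult.commute)
    have "\<not> \<epsilon> * L \<le> T N"
    proof
      assume "\<epsilon> * L \<le> T N"
      then obtain B where "N \<le> B" "\<kappa> \<le> (\<Sum>n\<in>{N..B}. log_cube_weight T n)"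
        using upward_excursion_weight[OF c decr \<delta> c\<delta> \<epsilon> N(2)] unfolding \<kappa>_def L_def by blast
      then show False
        using tail[of N B] N by linarith
    qed
    moreover have "\<not> T N \<le> - (\<epsilon> * L)"
    proof
      assume "T N \<le> - (\<epsilon> * L)"
      then obtain A where A: "2 \<le> A" "(1 - \<delta>) * L \<le> ln (real A)"
        and "\<kappa> \<le> (\<Sum>n\<in>{A..N}. log_cube_weight T n)"
        using downward_excursion_weight[OF c decr \<delta> c\<delta> \<epsilon>, of N] N large
        unfolding \<kappa>_def L_def by auto
      moreover have "ln (real N0 + 1) \<le> ln (real A)"
        using A large' by linarith
      then have "N0 \<le> A"
        using A by (subst (asm) ln_le_cancel_iff) auto
      ultimately show False
        using tail[of A N] by linarith
    qed
    ultimately have "\<bar>T N\<bar> < \<epsilon> * L"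
      by linarith
    then show ?case
      using L by (simp add: L_def dist_real_def abs_divide pos_divide_less_eq)
  qed
qed

lemma AE_summable_of_summable_integral:
  fixes f :: "nat \<Rightarrow> 'a \<Rightarrow> real"
  assumes meas: "\<And>n. f n \<in> borel_measurable M"
    and nonneg: "\<And>n x. 0 \<le> f n x"
    and int: "\<And>n. integrable M (f n)"
    and summ: "summable (\<lambda>n. integral\<^sup>L M (f n))"
  shows "AE x in M. summable (\<lambda>n. f n x)"
proof -
  have "(\<integral>\<^sup>+x. (\<Sum>n. ennreal (f n x)) \<partial>M) = (\<Sum>n. \<integral>\<^sup>+x. ennreal (f n x) \<partial>M)"
    using meas by (intro nn_integral_suminf) auto
  also have "\<dots> = (\<Sum>n. ennreal (integral\<^sup>L M (f n)))"
    using int nonneg by (subst nn_integral_eq_integral) auto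
  also have "\<dots> = ennreal (\<Sum>n. integral\<^sup>L M (f n))"
    using summ nonneg by (intro suminf_ennreal2) (auto intro: integral_nonneg_AE)
  finally have "(\<integral>\<^sup>+x. (\<Sum>n. ennreal (f n x)) \<partial>M) \<noteq> \<infinity>"
    by simp
  then have "AE x in M. (\<Sum>n. ennreal (f n x)) \<noteq> \<infinity>"
    using meas by (intro nn_integral_noteq_infinite) auto
  then show ?thesis
    by (rule AE_mp) (auto intro!: AE_I2 summable_suminf_not_top nonneg simp: top_unique)
qed

lemma centered_log_sum_decrease:
  fixes y :: "nat \<Rightarrow> real"
  assumes c: "0 \<le> c" and lower: "\<And>k. 1 \<le> k \<Longrightarrow> m - c \<le> y k" and N: "1 \<le> N" "N \<le> n"
  shows "(\<Sum>k=1..N. (y k - m) / real k) - c * (ln (real n) - ln (real N))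
           \<le> (\<Sum>k=1..n. (y k - m) / real k)"
proof -
  have "{1..n} = {1..N} \<union> {N<..n}"
    using N by auto
  then have split: "(\<Sum>k=1..n. (y k - m) / real k)
      = (\<Sum>k=1..N. (y k - m) / real k) + (\<Sum>k\<in>{N<..n}. (y k - m) / real k)"
    by (simp only:) (subst sum.union_disjoint; auto)
  have "- c * (\<Sum>k\<in>{N<..n}. 1 / real k) \<le> (\<Sum>k\<in>{N<..n}. (y k - m) / real k)"
    unfolding sum_distrib_left
  proof (intro sum_mono)
    fix k assume "k \<in> {N<..n}"
    then have "- c \<le> y k - m"
      using N lower[of k] by auto
    then show "- c * (1 / real k) \<le> (y k - m) / real k"
      using divide_right_mono[of "- c" "y k - m" "real k"] by simp
  qed
  moreover have "c * (\<Sum>k\<in>{N<..n}. 1 / real k) \<le> c * (ln (real n) - ln (real N))"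
    using sum_inverse_le_ln_diff[OF N] c by (intro mult_left_mono)
  ultimately show ?thesis
    unfolding split by linarith
qed

lemma log_average_of_centered:
  fixes y :: "nat \<Rightarrow> real"
  assumes "(\<lambda>n. (\<Sum>k=1..n. (y k - m) / real k) / ln (real n)) \<longlonglongrightarrow> 0"
  shows "(\<lambda>n. (1 / ln (real n)) * (\<Sum>k=1..n. y k / real k)) \<longlonglongrightarrow> m"
proof -
  have "(\<lambda>n. (\<Sum>k=1..n. (y k - m) / real k) / ln (real n) + m * (harm n / ln (real n))) \<longlonglongrightarrow> 0 + m * 1"
    by (intro tendsto_intros assms harm_over_ln)
  moreover have "(\<Sum>k=1..n. (y k - m) / real k) / ln (real n) + m * (harm n / ln (real n))
      = (1 / ln (real n)) * (\<Sum>k=1..n. y k / real k)" for n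
  proof -
    have "(\<Sum>k=1..n. y k / real k) = (\<Sum>k=1..n. (y k - m) / real k) + m * harm n"
      unfolding harm_def by (simp add: sum_distrib_left divide_inverse left_diff_distrib sum_subtractf)
    then show ?thesis
      by (simp add: add_divide_distrib)
  qed
  ultimately show ?thesis
    by simp
qed

lemma (in prob_space) centered_log_sum_second_moment:
  fixes Y :: "nat \<Rightarrow> 'a \<Rightarrow> real" and \<rho> :: "nat \<Rightarrow> nat \<Rightarrow> real"
  assumes int: "\<And>k. 1 \<le> k \<Longrightarrow> integrable M (Y k)"
    and int2: "\<And>k l. 1 \<le> k \<Longrightarrow> 1 \<le> l \<Longrightarrow> integrable M (\<lambda>x. Y k x * Y l x)"
    and mean: "\<And>k. 1 \<le> k \<Longrightarrow> expectation (Y k) = m"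
    and cov: "\<And>k l. 1 \<le> k \<Longrightarrow> 1 \<le> l \<Longrightarrow> expectation (\<lambda>x. Y k x * Y l x) - m^2 \<le> C * \<bar>\<rho> k l\<bar>"
  defines "T \<equiv> \<lambda>n x. \<Sum>k=1..n. (Y k x - m) / real k"
  shows "integrable M (\<lambda>x. (T n x)^2)"
    and "expectation (\<lambda>x. (T n x)^2) \<le> C * (\<Sum>k=1..n. \<Sum>l=1..n. \<bar>\<rho> k l\<bar> / (real k * real l))"
proof -
  define Z where "Z k l x = (Y k x - m) * (Y l x - m) / (real k * real l)" for k l x
  have square: "(T n x)^2 = (\<Sum>k=1..n. \<Sum>l=1..n. Z k l x)" for x
    unfolding T_def Z_def power2_eq_square sum_product by (simp add: field_simps)
  have expand: "Z k l = (\<lambda>x. (Y k x * Y l x - m * Y k x - m * Y l x + m * m) / (real k * real l))" for k l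
    unfolding Z_def by (auto simp: algebra_simps)
  have Z_int: "integrable M (Z k l)" if "1 \<le> k" "1 \<le> l" for k l
    unfolding expand using int int2 that by auto
  have Z_exp: "expectation (Z k l) = (expectation (\<lambda>x. Y k x * Y l x) - m^2) / (real k * real l)"
    if "1 \<le> k" "1 \<le> l" for k l
    unfolding expand using int int2 mean that by (simp add: prob_space power2_eq_square)
  show "integrable M (\<lambda>x. (T n x)^2)"
    unfolding square using Z_int by (auto intro!: Bochner_Integration.integrable_sum)
  have "expectation (\<lambda>x. (T n x)^2) = (\<Sum>k=1..n. expectation (\<lambda>x. \<Sum>l=1..n. Z k l x))"
    unfolding square
    by (rule Bochner_Integration.integral_sum) (auto intro!: Bochner_Integration.integrable_sum Z_int)
  also have "\<dots> = (\<Sum>k=1..n. \<Sum>l=1..n. expectation (Z k l))"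
    by (intro sum.cong refl Bochner_Integration.integral_sum) (auto intro: Z_int)
  also have "\<dots> \<le> (\<Sum>k=1..n. \<Sum>l=1..n. C * (\<bar>\<rho> k l\<bar> / (real k * real l)))"
    using cov by (intro sum_mono) (auto simp: Z_exp divide_right_mono)
  finally show "expectation (\<lambda>x. (T n x)^2) \<le> C * (\<Sum>k=1..n. \<Sum>l=1..n. \<bar>\<rho> k l\<bar> / (real k * real l))"
    by (simp add: sum_distrib_left)
qed

lemma (in prob_space) log_average_strong_law:
  fixes Y :: "nat \<Rightarrow> 'a \<Rightarrow> real" and \<rho> :: "nat \<Rightarrow> nat \<Rightarrow> real"
  assumes meas: "\<And>k. 1 \<le> k \<Longrightarrow> Y k \<in> borel_measurable M"
    and c: "0 \<le> c" and lower: "\<And>k x. 1 \<le> k \<Longrightarrow> m - c \<le> Y k x"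
    and int: "\<And>k. 1 \<le> k \<Longrightarrow> integrable M (Y k)"
    and int2: "\<And>k l. 1 \<le> k \<Longrightarrow> 1 \<le> l \<Longrightarrow> integrable M (\<lambda>x. Y k x * Y l x)"
    and mean: "\<And>k. 1 \<le> k \<Longrightarrow> expectation (Y k) = m"
    and cov: "\<And>k l. 1 \<le> k \<Longrightarrow> 1 \<le> l \<Longrightarrow> expectation (\<lambda>x. Y k x * Y l x) - m^2 \<le> C * \<bar>\<rho> k l\<bar>"
    and summ: "summable (\<lambda>n::nat. if n \<ge> 2 then
            1 / (real n * (ln (real n)) ^ 3) *
            (\<Sum>k=1..n. \<Sum>l=1..n. \<bar>\<rho> k l\<bar> / (real k * real l)) else 0)"
  shows "AE x in M. (\<lambda>n. (1 / ln (real n)) * (\<Sum>k=1..n. Y k x / real k)) \<longlonglongrightarrow> m"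
proof -
  define T where "T n x = (\<Sum>k=1..n. (Y k x - m) / real k)" for n x
  define D where "D n = (\<Sum>k=1..n. \<Sum>l=1..n. \<bar>\<rho> k l\<bar> / (real k * real l))" for n
  define W where "W n x = log_cube_weight (\<lambda>n. T n x) n" for n x
  have moment: "integrable M (\<lambda>x. (T n x)^2)" "expectation (\<lambda>x. (T n x)^2) \<le> C * D n" for n
    unfolding T_def D_def using centered_log_sum_second_moment[OF int int2 mean cov] by auto
  have "T n \<in> borel_measurable M" for n
    unfolding T_def using meas by (intro borel_measurable_sum) auto
  then have W_meas: "W n \<in> borel_measurable M" for n
    unfolding W_def log_cube_weight_def by measurable
  have W_int: "integrable M (W n)" for n
    unfolding W_def log_cube_weight_def using moment by (cases "2 \<le> n") auto
  have W_nonneg: "0 \<le> W n x" for n x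
    by (simp add: W_def log_cube_weight_nonneg)
  have "summable (\<lambda>n. expectation (W n))"
  proof (rule summable_comparison_test)
    show "summable (\<lambda>n::nat. C * (if n \<ge> 2 then 1 / (real n * (ln (real n)) ^ 3) * D n else 0))"
      using summ unfolding D_def by (intro summable_mult)
    have "norm (expectation (W n)) \<le> C * (if n \<ge> 2 then 1 / (real n * (ln (real n)) ^ 3) * D n else 0)"
      if "2 \<le> n" for n
    proof -
      have "0 \<le> expectation (W n)"
        using W_nonneg by (simp add: integral_nonneg_AE)
      moreover have "W n = (\<lambda>x. (T n x)^2 / (real n * ln (real n) ^ 3))"
        using that by (simp add: W_def log_cube_weight_def fun_eq_iff)
      then have "expectation (W n) = expectation (\<lambda>x. (T n x)^2) / (real n * ln (real n) ^ 3)"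
        by simp
      moreover have "\<dots> \<le> C * D n / (real n * ln (real n) ^ 3)"
        using moment(2) that by (intro divide_right_mono) auto
      ultimately show ?thesis
        using that by simp
    qed
    then show "\<exists>N. \<forall>n\<ge>N. norm (expectation (W n))
        \<le> C * (if n \<ge> 2 then 1 / (real n * (ln (real n)) ^ 3) * D n else 0)"
      by blast
  qed
  then have "AE x in M. summable (\<lambda>n. W n x)"
    by (rule AE_summable_of_summable_integral[OF W_meas W_nonneg W_int])
  then show ?thesis
  proof (rule eventually_mono)
    fix x assume "summable (\<lambda>n. W n x)"
    then have "(\<lambda>n. T n x / ln (real n)) \<longlonglongrightarrow> 0"
      using c lower unfolding W_def T_def
      by (intro log_cube_tauberian[of c] centered_log_sum_decrease) auto
    then show "(\<lambda>n. (1 / ln (real n)) * (\<Sum>k=1..n. Y k x / real k)) \<longlonglongrightarrow> m"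
      unfolding T_def by (rule log_average_of_centered)
  qed
qed

lemma std_normal_cos_sin:
  "integral\<^sup>L std_normal_distribution (\<lambda>x. cos (s * x)) = exp (- (s^2) / 2)"
  "integral\<^sup>L std_normal_distribution (\<lambda>x. sin (s * x)) = 0"
proof -
  interpret N: real_distribution std_normal_distribution
    by (rule real_dist_normal_dist)
  have int: "integrable std_normal_distribution (\<lambda>x. iexp (s * x))"
    by (intro N.integrable_iexp) auto
  have "iexp (s * x) = cis (s * x)" for x
    by (simp add: cis_conv_exp)
  then have "integral\<^sup>L std_normal_distribution (\<lambda>x. cos (s * x)) = Re (char std_normal_distribution s)"
    and "integral\<^sup>L std_normal_distribution (\<lambda>x. sin (s * x)) = Im (char std_normal_distribution s)"
    unfolding char_def integral_Re[OF int, symmetric] integral_Im[OF int, symmetric] by simp_all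
  then show "integral\<^sup>L std_normal_distribution (\<lambda>x. cos (s * x)) = exp (- (s^2) / 2)"
    and "integral\<^sup>L std_normal_distribution (\<lambda>x. sin (s * x)) = 0"
    by (simp_all add: char_std_normal_distribution)
qed

lemma (in prob_space) centered_gaussian_as_scaled_normal:
  assumes Z: "gaussian_rv M Z" and mean: "expectation Z = 0"
  obtains \<sigma> :: real where
    "\<And>f :: real \<Rightarrow> real. f \<in> borel_measurable borel \<Longrightarrow>
       integrable M (\<lambda>x. f (Z x)) \<longleftrightarrow> integrable std_normal_distribution (\<lambda>y. f (\<sigma> * y))"
    "\<And>f :: real \<Rightarrow> real. f \<in> borel_measurable borel \<Longrightarrow>
       expectation (\<lambda>x. f (Z x)) = integral\<^sup>L std_normal_distribution (\<lambda>y. f (\<sigma> * y))"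
proof -
  interpret N: real_distribution std_normal_distribution
    by (rule real_dist_normal_dist)
  have [measurable]: "Z \<in> borel_measurable M"
    using Z by (simp add: gaussian_rv_def)
  from Z consider (degenerate) c where "AE x in M. Z x = c"
    | (normal) \<mu> \<sigma> where "0 < \<sigma>" "distributed M lborel Z (\<lambda>x. ennreal (normal_density \<mu> \<sigma> x))"
    unfolding gaussian_rv_def by blast
  then show thesis
  proof cases
    case degenerate
    have "expectation Z = expectation (\<lambda>x. c)"
      using degenerate by (intro integral_cong_AE) auto
    then have "AE x in M. Z x = 0"
      using degenerate mean by (simp add: prob_space)
    then have AE_f: "AE x in M. f (Z x) = f 0" for f :: "real \<Rightarrow> real"
      by eventually_elim simp
    show thesis
    proof (rule that[of 0])
      fix f :: "real \<Rightarrow> real" assume [measurable]: "f \<in> borel_measurable borel"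
      have "integrable M (\<lambda>x. f (Z x)) \<longleftrightarrow> integrable M (\<lambda>x. f 0)"
        using AE_f by (intro integrable_cong_AE) auto
      then show "integrable M (\<lambda>x. f (Z x)) \<longleftrightarrow> integrable std_normal_distribution (\<lambda>y. f (0 * y))"
        by simp
      have "expectation (\<lambda>x. f (Z x)) = expectation (\<lambda>x. f 0)"
        using AE_f by (intro integral_cong_AE) auto
      then show "expectation (\<lambda>x. f (Z x)) = integral\<^sup>L std_normal_distribution (\<lambda>y. f (0 * y))"
        using N.prob_space by (simp add: prob_space)
    qed
  next
    case normal
    have "\<mu> = expectation Z"
      using distributed_integral[OF normal(2), of "\<lambda>x. x"] integral_normal_moment_nz_1[OF normal(1)]
      by simp
    then have D: "distributed M lborel (\<lambda>x. Z x / \<sigma>) (\<lambda>x. ennreal (std_normal_density x))"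
      using normal normal_standard_normal_convert[OF normal(1), of Z \<mu>] mean by simp
    show thesis
    proof (rule that[of \<sigma>])
      fix f :: "real \<Rightarrow> real" assume [measurable]: "f \<in> borel_measurable borel"
      have fZ: "(\<lambda>x. f (Z x)) = (\<lambda>x. f (\<sigma> * (Z x / \<sigma>)))"
        using normal(1) by simp
      have "integrable lborel (\<lambda>y. std_normal_density y * f (\<sigma> * y))
          \<longleftrightarrow> integrable M (\<lambda>x. f (\<sigma> * (Z x / \<sigma>)))"
        by (rule distributed_integrable[OF D]) auto
      moreover have "integrable std_normal_distribution (\<lambda>y. f (\<sigma> * y))
          \<longleftrightarrow> integrable lborel (\<lambda>y. std_normal_density y * f (\<sigma> * y))"
        by (subst integrable_density) auto
      ultimately show "integrable M (\<lambda>x. f (Z x)) \<longleftrightarrow> integrable std_normal_distribution (\<lambda>y. f (\<sigma> * y))"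
        unfolding fZ by blast
      have "(\<integral>y. std_normal_density y * f (\<sigma> * y) \<partial>lborel) = expectation (\<lambda>x. f (\<sigma> * (Z x / \<sigma>)))"
        by (rule distributed_integral[OF D]) auto
      moreover have "integral\<^sup>L std_normal_distribution (\<lambda>y. f (\<sigma> * y))
          = (\<integral>y. std_normal_density y * f (\<sigma> * y) \<partial>lborel)"
        by (subst integral_density) auto
      ultimately show "expectation (\<lambda>x. f (Z x)) = integral\<^sup>L std_normal_distribution (\<lambda>y. f (\<sigma> * y))"
        unfolding fZ by simp
    qed
  qed
qed

lemma (in prob_space) centered_gaussian_moments:
  assumes Z: "gaussian_rv M Z" and mean: "expectation Z = 0"
  defines "v \<equiv> expectation (\<lambda>x. (Z x)^2)"
  shows "integrable M (\<lambda>x. Z x ^ k)"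
    and "expectation (\<lambda>x. cos (t * Z x)) = exp (- (t^2 * v) / 2)"
    and "expectation (\<lambda>x. sin (t * Z x)) = 0"
    and "expectation (\<lambda>x. Z x ^ 4) = 3 * v^2"
proof -
  obtain \<sigma> where int: "\<And>f :: real \<Rightarrow> real. f \<in> borel_measurable borel \<Longrightarrow>
       integrable M (\<lambda>x. f (Z x)) \<longleftrightarrow> integrable std_normal_distribution (\<lambda>y. f (\<sigma> * y))"
    and E: "\<And>f :: real \<Rightarrow> real. f \<in> borel_measurable borel \<Longrightarrow>
       expectation (\<lambda>x. f (Z x)) = integral\<^sup>L std_normal_distribution (\<lambda>y. f (\<sigma> * y))"
    using centered_gaussian_as_scaled_normal[OF Z mean] by metis
  have moment: "expectation (\<lambda>x. Z x ^ j) = \<sigma> ^ j * integral\<^sup>L std_normal_distribution (\<lambda>y. y ^ j)" for j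
    using E[of "\<lambda>y. y ^ j"] by (simp add: power_mult_distrib)
  have "v = \<sigma>^2"
    using moment[of 2] std_normal_distribution_even_moments(1)[of 1] by (simp add: v_def)
  show "integrable M (\<lambda>x. Z x ^ k)"
    using int[of "\<lambda>y. y ^ k"] integrable_std_normal_distribution_moment[of k]
    by (simp add: power_mult_distrib)
  show "expectation (\<lambda>x. cos (t * Z x)) = exp (- (t^2 * v) / 2)"
    using E[of "\<lambda>y. cos (t * y)"] std_normal_cos_sin(1)[of "t * \<sigma>"] \<open>v = \<sigma>^2\<close>
    by (simp add: mult.assoc power_mult_distrib)
  show "expectation (\<lambda>x. sin (t * Z x)) = 0"
    using E[of "\<lambda>y. sin (t * y)"] std_normal_cos_sin(2)[of "t * \<sigma>"] by (simp add: mult.assoc)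
  show "expectation (\<lambda>x. Z x ^ 4) = 3 * v^2"
    using moment[of 4] std_normal_distribution_even_moments(1)[of 2] \<open>v = \<sigma>^2\<close>
    by (simp add: fact_numeral power_mult[symmetric])
qed

lemma jointly_gaussian_pair:
  assumes "jointly_gaussian M G" "1 \<le> k" "1 \<le> l"
  shows "gaussian_rv M (\<lambda>x. a * G k x + b * G l x)"
proof -
  define c where "c i = (if i = k then a else 0) + (if i = l then b else 0)" for i
  have "gaussian_rv M (\<lambda>x. \<Sum>i\<in>{k, l}. c i * G i x)"
    using assms unfolding jointly_gaussian_def by auto
  moreover have "(\<Sum>i\<in>{k, l}. c i * G i x) = a * G k x + b * G l x" for x
    by (cases "k = l") (auto simp: c_def algebra_simps)
  ultimately show ?thesis
    by simp
qed

text \<open>Elementary estimates for exp(-a)(cosh(a r) - 1) and exp(-a) sinh(a r), which are the covariances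
  of cos(t G_k) and sin(t G_k) when a = t^2 and r is the correlation.\<close>

lemma abs_exp_minus_one_le: "\<bar>exp x - 1\<bar> \<le> \<bar>x\<bar> * exp \<bar>x\<bar>" for x :: real
proof (cases "0 \<le> x")
  case True
  have "exp x * (1 - x) \<le> exp x * exp (- x)"
    using exp_ge_add_one_self[of "- x"] by (intro mult_left_mono) auto
  then show ?thesis
    using True by (simp add: exp_minus algebra_simps)
next
  case False
  have "1 - exp x \<le> - x"
    using exp_ge_add_one_self[of x] by linarith
  also have "\<dots> \<le> \<bar>x\<bar> * exp \<bar>x\<bar>"
    using False by simp
  finally show ?thesis
    using False by simp
qed

lemma cosh_sinh_deviation:
  fixes a r :: real
  assumes a: "0 \<le> a" and r: "\<bar>r\<bar> \<le> 1"
  shows "\<bar>exp (- a) * ((exp (a * r) + exp (- (a * r))) / 2 - 1)\<bar> \<le> a * \<bar>r\<bar>"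
    and "\<bar>exp (- a) * ((exp (a * r) - exp (- (a * r))) / 2)\<bar> \<le> a * \<bar>r\<bar>"
proof -
  have "\<bar>a * r\<bar> \<le> a"
    using a r mult_left_mono[OF r a] by (simp add: abs_mult)
  have bound: "\<bar>exp y - 1\<bar> \<le> a * \<bar>r\<bar> * exp a" if "\<bar>y\<bar> = \<bar>a * r\<bar>" for y
  proof -
    have "\<bar>exp y - 1\<bar> \<le> \<bar>y\<bar> * exp \<bar>y\<bar>"
      by (rule abs_exp_minus_one_le)
    also have "\<dots> = \<bar>a * r\<bar> * exp \<bar>a * r\<bar>"
      using that by simp
    also have "\<dots> \<le> \<bar>a * r\<bar> * exp a"
      using \<open>\<bar>a * r\<bar> \<le> a\<close> by (intro mult_left_mono) auto
    finally show ?thesis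
      using a by (simp add: abs_mult)
  qed
  have u: "\<bar>exp (a * r) - 1\<bar> \<le> a * \<bar>r\<bar> * exp a" and w: "\<bar>exp (- (a * r)) - 1\<bar> \<le> a * \<bar>r\<bar> * exp a"
    by (rule bound; simp)+
  have scale: "\<bar>exp (- a) * X\<bar> \<le> a * \<bar>r\<bar>" if "\<bar>X\<bar> \<le> a * \<bar>r\<bar> * exp a" for X
  proof -
    have "\<bar>exp (- a) * X\<bar> \<le> exp (- a) * (a * \<bar>r\<bar> * exp a)"
      using that by (simp add: abs_mult)
    also have "\<dots> = a * \<bar>r\<bar>"
      by (simp add: exp_minus)
    finally show ?thesis .
  qed
  show "\<bar>exp (- a) * ((exp (a * r) + exp (- (a * r))) / 2 - 1)\<bar> \<le> a * \<bar>r\<bar>"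
    using u w by (intro scale) (auto simp: abs_le_iff field_simps)
  show "\<bar>exp (- a) * ((exp (a * r) - exp (- (a * r))) / 2)\<bar> \<le> a * \<bar>r\<bar>"
    using u w by (intro scale) (auto simp: abs_le_iff field_simps)
qed

locale standard_gaussian_sequence = prob_space M for M :: "'a measure" +
  fixes G :: "nat \<Rightarrow> 'a \<Rightarrow> real"
  assumes jointly_gaussian: "jointly_gaussian M G"
    and centered: "\<And>n. 1 \<le> n \<Longrightarrow> expectation (G n) = 0"
    and unit_variance: "\<And>n. 1 \<le> n \<Longrightarrow> expectation (\<lambda>x. (G n x)^2) = 1"
begin

definition corr :: "nat \<Rightarrow> nat \<Rightarrow> real" where
  "corr k l = expectation (\<lambda>x. G k x * G l x)"

lemma gaussian_pair: "1 \<le> k \<Longrightarrow> 1 \<le> l \<Longrightarrow> gaussian_rv M (\<lambda>x. a * G k x + b * G l x)"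
  using jointly_gaussian_pair[OF jointly_gaussian] .

lemma gaussian: "1 \<le> k \<Longrightarrow> gaussian_rv M (G k)"
  using gaussian_pair[of k k 1 0] by simp

lemma measurable_G [measurable]: "1 \<le> k \<Longrightarrow> G k \<in> borel_measurable M"
  using gaussian by (simp add: gaussian_rv_def)

lemma integrable_power: "1 \<le> k \<Longrightarrow> integrable M (\<lambda>x. G k x ^ j)"
  using centered_gaussian_moments(1)[OF gaussian centered] .

lemma integrable_G: "1 \<le> k \<Longrightarrow> integrable M (G k)"
  using integrable_power[of k 1] by simp

text \<open>The product G_k G_l is integrable, by polarization from the square of a Gaussian sum.\<close>

lemma integrable_product:
  assumes kl: "1 \<le> k" "1 \<le> l"
  shows "integrable M (\<lambda>x. G k x * G l x)"
proof -
  have "expectation (\<lambda>x. 1 * G k x + 1 * G l x) = 0"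
    using integrable_G centered kl by simp
  then have "integrable M (\<lambda>x. (1 * G k x + 1 * G l x) ^ 2)"
    by (intro centered_gaussian_moments(1) gaussian_pair kl)
  then have "integrable M (\<lambda>x. ((1 * G k x + 1 * G l x) ^ 2 - G k x ^ 2 - G l x ^ 2) / 2)"
    using integrable_power kl by auto
  then show ?thesis
    by (simp add: power2_eq_square algebra_simps)
qed

lemma pair_moments:
  fixes a b t :: real
  assumes kl: "1 \<le> k" "1 \<le> l"
  defines "Z \<equiv> \<lambda>x. a * G k x + b * G l x"
  defines "v \<equiv> a^2 + b^2 + 2 * a * b * corr k l"
  shows "integrable M (\<lambda>x. Z x ^ j)"
    and "expectation (\<lambda>x. cos (t * Z x)) = exp (- (t^2 * v) / 2)"
    and "expectation (\<lambda>x. Z x ^ 4) = 3 * v^2"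
proof -
  have g: "gaussian_rv M Z"
    unfolding Z_def using gaussian_pair[OF kl] .
  have mean: "expectation Z = 0"
    unfolding Z_def using integrable_G centered kl by simp
  have "(\<lambda>x. (Z x)^2) = (\<lambda>x. a^2 * (G k x)^2 + b^2 * (G l x)^2 + (2 * a * b) * (G k x * G l x))"
    unfolding Z_def by (simp add: power2_eq_square algebra_simps)
  then have var: "expectation (\<lambda>x. (Z x)^2) = v"
    using integrable_power integrable_product[OF kl] unit_variance kl by (simp add: v_def corr_def)
  show "integrable M (\<lambda>x. Z x ^ j)"
    using centered_gaussian_moments(1)[OF g mean] .
  show "expectation (\<lambda>x. cos (t * Z x)) = exp (- (t^2 * v) / 2)"
    using centered_gaussian_moments(2)[OF g mean] var by simp
  show "expectation (\<lambda>x. Z x ^ 4) = 3 * v^2"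
    using centered_gaussian_moments(4)[OF g mean] var by simp
qed

text \<open>The correlations are bounded by 1 (Cauchy-Schwarz, via the variances of G_k + G_l and G_k - G_l).\<close>

lemma corr_bound:
  assumes kl: "1 \<le> k" "1 \<le> l"
  shows "\<bar>corr k l\<bar> \<le> 1"
proof -
  have "0 \<le> 2 + 2 * s * corr k l" if "s^2 = 1" for s
  proof -
    have "(\<lambda>x. (s * G k x + 1 * G l x)^2) = (\<lambda>x. s^2 * (G k x)^2 + (G l x)^2 + 2 * s * (G k x * G l x))"
      by (simp add: power2_eq_square algebra_simps)
    then have "expectation (\<lambda>x. (s * G k x + 1 * G l x)^2) = 2 + 2 * s * corr k l"
      using integrable_power integrable_product[OF kl] unit_variance kl that by (simp add: corr_def)
    moreover have "0 \<le> expectation (\<lambda>x. (s * G k x + 1 * G l x)^2)"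
      by (intro integral_nonneg_AE) auto
    ultimately show ?thesis
      by simp
  qed
  from this[of 1] this[of "- 1"] show ?thesis
    by simp
qed

text \<open>Covariance structure of the trigonometric observables cos(t G_k), sin(t G_k), computed through
  the product-to-sum formulas and the characteristic function of G_k -+ G_l.\<close>

lemma trig_products:
  assumes kl: "1 \<le> k" "1 \<le> l"
  shows "expectation (\<lambda>x. cos (t * G k x) * cos (t * G l x)) =
           exp (- (t^2)) * ((exp (t^2 * corr k l) + exp (- (t^2 * corr k l))) / 2)"
    and "expectation (\<lambda>x. sin (t * G k x) * sin (t * G l x)) =
           exp (- (t^2)) * ((exp (t^2 * corr k l) - exp (- (t^2 * corr k l))) / 2)"
proof -
  define A where "A = (\<lambda>x. cos (t * (1 * G k x + (- 1) * G l x)))"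
  define B where "B = (\<lambda>x. cos (t * (1 * G k x + 1 * G l x)))"
  have int: "integrable M A" "integrable M B"
    unfolding A_def B_def using kl by (auto intro!: integrable_const_bound[where B = 1])
  have exponent: "exp (- (t^2 * (1^2 + s^2 + 2 * 1 * s * corr k l)) / 2)
      = exp (- (t^2)) * exp (- (s * (t^2 * corr k l)))" if "s^2 = 1" for s
  proof -
    have "- (t^2 * (1^2 + s^2 + 2 * 1 * s * corr k l)) / 2 = - (t^2) + - (s * (t^2 * corr k l))"
      using that by (simp add: field_simps)
    then show ?thesis
      by (simp only: exp_add)
  qed
  have EA: "expectation A = exp (- (t^2)) * exp (t^2 * corr k l)"
    using pair_moments(2)[OF kl, where a = 1 and b = "- 1" and t = t] exponent[of "- 1"] by (simp add: A_def)
  have EB: "expectation B = exp (- (t^2)) * exp (- (t^2 * corr k l))"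
    using pair_moments(2)[OF kl, where a = 1 and b = 1 and t = t] exponent[of 1] by (simp add: B_def)
  have cc: "(\<lambda>x. cos (t * G k x) * cos (t * G l x)) = (\<lambda>x. (A x + B x) / 2)"
    and ss: "(\<lambda>x. sin (t * G k x) * sin (t * G l x)) = (\<lambda>x. (A x - B x) / 2)"
    by (simp_all add: A_def B_def cos_add cos_diff algebra_simps)
  show "expectation (\<lambda>x. cos (t * G k x) * cos (t * G l x)) =
           exp (- (t^2)) * ((exp (t^2 * corr k l) + exp (- (t^2 * corr k l))) / 2)"
    unfolding cc using int EA EB by (simp add: algebra_simps)
  show "expectation (\<lambda>x. sin (t * G k x) * sin (t * G l x)) =
           exp (- (t^2)) * ((exp (t^2 * corr k l) - exp (- (t^2 * corr k l))) / 2)"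
    unfolding ss using int EA EB by (simp add: algebra_simps)
qed

text \<open>The mixed fourth moment E(G_k^2 G_l^2) = 1 + 2 corr(k,l)^2, by polarization.\<close>

lemma square_product:
  assumes kl: "1 \<le> k" "1 \<le> l"
  shows "integrable M (\<lambda>x. (G k x)^2 * (G l x)^2)"
    and "expectation (\<lambda>x. (G k x)^2 * (G l x)^2) = 1 + 2 * (corr k l)^2"
proof -
  define A where "A = (\<lambda>x. (1 * G k x + 1 * G l x) ^ 4)"
  define B where "B = (\<lambda>x. (1 * G k x + (- 1) * G l x) ^ 4)"
  have int: "integrable M A" "integrable M B"
    unfolding A_def B_def using pair_moments(1)[OF kl, where a = 1 and b = 1 and j = 4]
      pair_moments(1)[OF kl, where a = 1 and b = "- 1" and j = 4]
    by simp_all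
  have EA: "expectation A = 3 * (2 + 2 * corr k l)^2"
    using pair_moments(3)[OF kl, where a = 1 and b = 1] by (simp add: A_def)
  have EB: "expectation B = 3 * (2 - 2 * corr k l)^2"
    using pair_moments(3)[OF kl, where a = 1 and b = "- 1"] by (simp add: B_def)
  have fourth: "expectation (\<lambda>x. G j x ^ 4) = 3" if "1 \<le> j" for j
    using centered_gaussian_moments(4)[OF gaussian centered, of j] unit_variance that by simp
  have eq: "(\<lambda>x. (G k x)^2 * (G l x)^2) = (\<lambda>x. (A x + B x - 2 * G k x ^ 4 - 2 * G l x ^ 4) / 12)"
    by (simp add: A_def B_def power2_eq_square power4_eq_xxxx algebra_simps)
  show "integrable M (\<lambda>x. (G k x)^2 * (G l x)^2)"
    unfolding eq using int integrable_power kl by auto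
  show "expectation (\<lambda>x. (G k x)^2 * (G l x)^2) = 1 + 2 * (corr k l)^2"
    unfolding eq using int integrable_power EA EB fourth kl by (simp add: power2_eq_square algebra_simps)
qed

end

locale log_summable_gaussian_sequence = standard_gaussian_sequence +
  assumes summable_corr: "summable (\<lambda>n::nat. if n \<ge> 2 then
            1 / (real n * (ln (real n)) ^ 3) *
            (\<Sum>k=1..n. \<Sum>l=1..n. \<bar>corr k l\<bar> / (real k * real l)) else 0)"
begin

lemma AE_log_average_cos:
  "AE x in M. (\<lambda>n. (1 / ln (real n)) * (\<Sum>k=1..n. cos (t * G k x) / real k)) \<longlonglongrightarrow> exp (- (t^2) / 2)"
proof (rule log_average_strong_law[where c = "1 + exp (- (t^2) / 2)" and C = "t^2", OF _ _ _ _ _ _ _ summable_corr])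
  fix k :: nat assume k: "1 \<le> k"
  show "(\<lambda>x. cos (t * G k x)) \<in> borel_measurable M"
    using k by measurable
  show "exp (- (t^2) / 2) - (1 + exp (- (t^2) / 2)) \<le> cos (t * G k x)" for x
    by simp
  show "integrable M (\<lambda>x. cos (t * G k x))"
    using k by (intro integrable_const_bound[where B = 1]) auto
  show "expectation (\<lambda>x. cos (t * G k x)) = exp (- (t^2) / 2)"
    using centered_gaussian_moments(2)[OF gaussian centered, of k t] unit_variance k by simp
next
  fix k l :: nat assume kl: "1 \<le> k" "1 \<le> l"
  show "integrable M (\<lambda>x. cos (t * G k x) * cos (t * G l x))"
    using kl by (intro integrable_const_bound[where B = 1]) (auto simp: abs_mult mult_le_one)
  have "exp (- (t^2) / 2) ^ 2 = exp (- (t^2))"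
    by (simp add: exp_double[symmetric] power2_eq_square exp_add[symmetric])
  then have "expectation (\<lambda>x. cos (t * G k x) * cos (t * G l x)) - exp (- (t^2) / 2) ^ 2
      = exp (- (t^2)) * ((exp (t^2 * corr k l) + exp (- (t^2 * corr k l))) / 2 - 1)"
    using trig_products(1)[OF kl] by (simp add: algebra_simps)
  also have "\<dots> \<le> t^2 * \<bar>corr k l\<bar>"
    using cosh_sinh_deviation(1)[of "t^2" "corr k l"] corr_bound[OF kl] by (simp add: mult.assoc)
  finally show "expectation (\<lambda>x. cos (t * G k x) * cos (t * G l x)) - exp (- (t^2) / 2) ^ 2
      \<le> t^2 * \<bar>corr k l\<bar>" .
qed simp

lemma AE_log_average_sin:
  "AE x in M. (\<lambda>n. (1 / ln (real n)) * (\<Sum>k=1..n. sin (t * G k x) / real k)) \<longlonglongrightarrow> 0"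
proof (rule log_average_strong_law[where c = 1 and C = "t^2", OF _ _ _ _ _ _ _ summable_corr])
  fix k :: nat assume k: "1 \<le> k"
  show "(\<lambda>x. sin (t * G k x)) \<in> borel_measurable M"
    using k by measurable
  show "0 - 1 \<le> sin (t * G k x)" for x
    by simp
  show "integrable M (\<lambda>x. sin (t * G k x))"
    using k by (intro integrable_const_bound[where B = 1]) auto
  show "expectation (\<lambda>x. sin (t * G k x)) = 0"
    using centered_gaussian_moments(3)[OF gaussian centered, of k t] k by simp
next
  fix k l :: nat assume kl: "1 \<le> k" "1 \<le> l"
  show "integrable M (\<lambda>x. sin (t * G k x) * sin (t * G l x))"
    using kl by (intro integrable_const_bound[where B = 1]) (auto simp: abs_mult mult_le_one)
  have "expectation (\<lambda>x. sin (t * G k x) * sin (t * G l x)) - 0^2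
      \<le> \<bar>exp (- (t^2)) * ((exp (t^2 * corr k l) - exp (- (t^2 * corr k l))) / 2)\<bar>"
    using trig_products(2)[OF kl] by simp
  also have "\<dots> \<le> t^2 * \<bar>corr k l\<bar>"
    using cosh_sinh_deviation(2)[of "t^2" "corr k l"] corr_bound[OF kl] by (simp add: mult.assoc)
  finally show "expectation (\<lambda>x. sin (t * G k x) * sin (t * G l x)) - 0^2 \<le> t^2 * \<bar>corr k l\<bar>" .
qed simp

lemma AE_log_average_square:
  "AE x in M. (\<lambda>n. (1 / ln (real n)) * (\<Sum>k=1..n. (G k x)^2 / real k)) \<longlonglongrightarrow> 1"
proof (rule log_average_strong_law[where c = 1 and C = 2, OF _ _ _ _ _ _ _ summable_corr])
  fix k :: nat assume k: "1 \<le> k"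
  show "(\<lambda>x. (G k x)^2) \<in> borel_measurable M"
    using k by measurable
  show "1 - 1 \<le> (G k x)^2" for x
    by simp
  show "integrable M (\<lambda>x. (G k x)^2)"
    using integrable_power[OF k] .
  show "expectation (\<lambda>x. (G k x)^2) = 1"
    using unit_variance[OF k] .
next
  fix k l :: nat assume kl: "1 \<le> k" "1 \<le> l"
  show "integrable M (\<lambda>x. (G k x)^2 * (G l x)^2)"
    using square_product(1)[OF kl] .
  have "(corr k l)^2 = \<bar>corr k l\<bar> * \<bar>corr k l\<bar>"
    by (simp add: power2_eq_square)
  also have "\<dots> \<le> \<bar>corr k l\<bar> * 1"
    using corr_bound[OF kl] by (intro mult_left_mono) auto
  finally have "(corr k l)^2 \<le> \<bar>corr k l\<bar>"
    by simp
  then show "expectation (\<lambda>x. (G k x)^2 * (G l x)^2) - 1^2 \<le> 2 * \<bar>corr k l\<bar>"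
    using square_product(2)[OF kl] by simp
qed simp

end

lemma log_summable_gaussian_sequenceI:
  fixes M :: "'a measure" and G :: "nat \<Rightarrow> 'a \<Rightarrow> real"
  assumes "prob_space M" "jointly_gaussian M G"
    and "\<And>n. 1 \<le> n \<Longrightarrow> integral\<^sup>L M (G n) = 0"
    and "\<And>n. 1 \<le> n \<Longrightarrow> integral\<^sup>L M (\<lambda>x. (G n x)^2) = 1"
    and summ: "summable (\<lambda>n::nat. if n \<ge> 2 then 1 / (real n * (ln (real n)) ^ 3) *
        (\<Sum>k=1..n. \<Sum>l=1..n. \<bar>integral\<^sup>L M (\<lambda>x. G k x * G l x)\<bar> / (real k * real l)) else 0)"
  shows "log_summable_gaussian_sequence M G"
proof -
  have gaussian_sequence: "standard_gaussian_sequence M G"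
    using assms(1-4)
    by (intro standard_gaussian_sequence.intro standard_gaussian_sequence_axioms.intro) auto
  show ?thesis
  proof (intro log_summable_gaussian_sequence.intro log_summable_gaussian_sequence_axioms.intro
      gaussian_sequence)
    show "summable (\<lambda>n::nat. if n \<ge> 2 then 1 / (real n * (ln (real n)) ^ 3) *
        (\<Sum>k=1..n. \<Sum>l=1..n. \<bar>standard_gaussian_sequence.corr M G k l\<bar> / (real k * real l)) else 0)"
      using summ unfolding standard_gaussian_sequence.corr_def[OF gaussian_sequence] .
  qed
qed

lemma iexp_lipschitz: "cmod (iexp a - iexp b) \<le> \<bar>a - b\<bar>"
proof -
  have "iexp a - iexp b = iexp b * (iexp (a - b) - 1)"
    by (simp add: algebra_simps exp_add[symmetric])
  moreover have "cmod (iexp (a - b) - 1) \<le> \<bar>a - b\<bar>"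
    using iexp_approx1[of "a - b" 0] by simp
  ultimately show ?thesis
    by (simp add: norm_mult)
qed

lemma abs_le_one_plus_square: "\<bar>x\<bar> \<le> 1 + x^2" for x :: real
proof (cases "\<bar>x\<bar> \<le> 1")
  case False
  then have "\<bar>x\<bar> * 1 \<le> \<bar>x\<bar> * \<bar>x\<bar>"
    by (intro mult_left_mono) auto
  then show ?thesis
    by (simp add: power2_eq_square abs_mult[symmetric])
qed (simp add: add_increasing2)

lemma tendsto_from_rationals:
  fixes c :: "nat \<Rightarrow> real \<Rightarrow> 'b :: real_normed_vector" and f :: "real \<Rightarrow> 'b"
  assumes lip: "\<And>n t s. norm (c n t - c n s) \<le> \<bar>t - s\<bar> * B n"
    and bounded: "eventually (\<lambda>n. B n \<le> K) sequentially"
    and rat: "\<And>s. s \<in> \<rat> \<Longrightarrow> (\<lambda>n. c n s) \<longlonglongrightarrow> f s"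
    and cont: "continuous_on UNIV f"
  shows "(\<lambda>n. c n t) \<longlonglongrightarrow> f t"
  unfolding tendsto_iff
proof (intro allI impI)
  fix r :: real assume r: "0 < r"
  define K' where "K' = max K 1"
  have K': "0 < K'" "K \<le> K'"
    by (auto simp: K'_def)
  obtain d where d: "0 < d" "\<And>s. dist s t < d \<Longrightarrow> dist (f s) (f t) < r / 3"
    using cont r unfolding continuous_on_iff by (metis UNIV_I divide_pos_pos zero_less_numeral)
  obtain s where s: "s \<in> \<rat>" "t < s" "s < t + min d (r / (3 * K'))"
    using Rats_dense_in_real[of t "t + min d (r / (3 * K'))"] d r K' by auto
  have "\<bar>t - s\<bar> < r / (3 * K')"
    using s by simp
  then have close: "\<bar>t - s\<bar> * K' < r / 3"
    using K' by (simp add: less_divide_eq ac_simps)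
  have f_close: "dist (f s) (f t) < r / 3"
    using d s by (simp add: dist_real_def)
  have "\<forall>\<^sub>F n in sequentially. dist (c n s) (f s) < r / 3"
    using rat[OF s(1)] r unfolding tendsto_iff by (meson divide_pos_pos zero_less_numeral)
  then show "\<forall>\<^sub>F n in sequentially. dist (c n t) (f t) < r"
    using bounded
  proof eventually_elim
    case (elim n)
    have "norm (c n t - c n s) \<le> \<bar>t - s\<bar> * K'"
      using lip[of n t s] mult_left_mono[OF order_trans[OF elim(2) K'(2)], of "\<bar>t - s\<bar>"] by simp
    then have "dist (c n t) (c n s) < r / 3"
      using close by (simp add: dist_norm)
    then show ?case
      using elim(1) f_close dist_triangle[of "c n t" "f t" "c n s"] dist_triangle[of "c n s" "f t" "f s"]
      by (simp add: dist_commute)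
  qed
qed

text \<open>The probability distribution on {1..n} with weights 1/(k harm n); the pushforward of it under g is
  the harmonic empirical measure of the sequence g, whose integrals are the harmonic averages.\<close>

definition harmonic_pmf :: "nat \<Rightarrow> nat pmf" where
  "harmonic_pmf n = embed_pmf (\<lambda>k. if k \<in> {1..n} then 1 / (real k * harm n) else 0)"

lemma pmf_harmonic_pmf:
  assumes n: "1 \<le> n"
  shows "pmf (harmonic_pmf n) k = (if k \<in> {1..n} then 1 / (real k * harm n) else 0)"
  unfolding harmonic_pmf_def
proof (rule pmf_embed_pmf)
  have "(\<Sum>k=1..n. 1 / (real k * harm n)) = (\<Sum>k=1..n. 1 / real k) / harm n"
    by (simp add: sum_divide_distrib)
  also have "\<dots> = 1"
    using harm_pos_iff[where 'a = real, of n] n by (simp add: harm_def divide_inverse)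
  finally have sum1: "(\<Sum>k\<in>{1..n}. ennreal (1 / (real k * harm n))) = 1"
    by (subst sum_ennreal) (auto simp: harm_nonneg)
  have "(\<integral>\<^sup>+k. ennreal (if k \<in> {1..n} then 1 / (real k * harm n) else 0) \<partial>count_space UNIV)
      = (\<Sum>k\<in>{1..n}. ennreal (if k \<in> {1..n} then 1 / (real k * harm n) else 0))"
    by (rule nn_integral_count_space') auto
  then show "(\<integral>\<^sup>+k. ennreal (if k \<in> {1..n} then 1 / (real k * harm n) else 0) \<partial>count_space UNIV) = 1"
    using sum1 by simp
qed (simp add: harm_nonneg)

lemma integral_harmonic_empirical:
  fixes h :: "real \<Rightarrow> 'b :: {banach, second_countable_topology}"
  assumes n: "1 \<le> n" and h: "h \<in> borel_measurable borel"
  shows "integral\<^sup>L (distr (measure_pmf (harmonic_pmf n)) borel g) h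
           = (\<Sum>k=1..n. (1 / (real k * harm n)) *\<^sub>R h (g k))"
proof -
  have "integral\<^sup>L (distr (measure_pmf (harmonic_pmf n)) borel g) h
      = measure_pmf.expectation (harmonic_pmf n) (\<lambda>k. h (g k))"
    using h by (intro integral_distr) auto
  also have "\<dots> = (\<Sum>k=1..n. pmf (harmonic_pmf n) k *\<^sub>R h (g k))"
    using n by (intro integral_measure_pmf) (auto simp: set_pmf_iff pmf_harmonic_pmf split: if_splits)
  also have "\<dots> = (\<Sum>k=1..n. (1 / (real k * harm n)) *\<^sub>R h (g k))"
    using n by (intro sum.cong) (auto simp: pmf_harmonic_pmf)
  finally show ?thesis .
qed

lemma harmonic_weights_sum: "(\<Sum>k=1..n. (1 / (real k * harm n)) * f k) = (\<Sum>k=1..n. f k / real k) / harm n"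
  by (simp add: sum_divide_distrib)

lemma harmonic_average_shift:
  assumes "(\<lambda>n. (\<Sum>k=1..n. f k / real k) / harm n) \<longlonglongrightarrow> L"
  shows "(\<lambda>n. (\<Sum>k=1..n. (1 + f k) / real k) / harm n) \<longlonglongrightarrow> L + 1"
proof -
  have "\<forall>\<^sub>F n in sequentially.
      (\<Sum>k=1..n. (1 + f k) / real k) / harm n = (\<Sum>k=1..n. f k / real k) / harm n + 1"
    using eventually_ge_at_top[of 1]
  proof eventually_elim
    case (elim n)
    have "(0::real) < harm n"
      using elim by (intro harm_pos) auto
    then have "harm n \<noteq> (0::real)"
      by linarith
    moreover have "(\<Sum>k=1..n. (1 + f k) / real k) = harm n + (\<Sum>k=1..n. f k / real k)"
      by (simp add: sum.distrib harm_def divide_inverse distrib_right)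
    ultimately show ?case
      by (simp add: add_divide_distrib)
  qed
  moreover have "(\<lambda>n. (\<Sum>k=1..n. f k / real k) / harm n + 1) \<longlonglongrightarrow> L + 1"
    using assms by (intro tendsto_add tendsto_const)
  ultimately show ?thesis
    by (simp only: tendsto_cong)
qed

text \<open>The characteristic function of a harmonic empirical measure is Lipschitz, with constant the
  harmonic average of 1 + g_k^2 (which bounds that of |g_k|).\<close>

lemma harmonic_iexp_sum_lipschitz:
  fixes g :: "nat \<Rightarrow> real"
  shows "norm ((\<Sum>k=1..n. (1 / (real k * harm n)) *\<^sub>R iexp (t * g k))
              - (\<Sum>k=1..n. (1 / (real k * harm n)) *\<^sub>R iexp (s * g k)))
           \<le> \<bar>t - s\<bar> * ((\<Sum>k=1..n. (1 + (g k)^2) / real k) / harm n)"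
proof -
  define w where "w k = 1 / (real k * harm n)" for k :: nat
  have w_nonneg: "0 \<le> w k" for k
    by (simp add: w_def harm_nonneg)
  have "norm ((\<Sum>k=1..n. w k *\<^sub>R iexp (t * g k)) - (\<Sum>k=1..n. w k *\<^sub>R iexp (s * g k)))
      = norm (\<Sum>k=1..n. w k *\<^sub>R (iexp (t * g k) - iexp (s * g k)))"
    by (simp add: sum_subtractf scaleR_diff_right)
  also have "\<dots> \<le> (\<Sum>k=1..n. w k * (\<bar>t - s\<bar> * (1 + (g k)^2)))"
  proof (intro order_trans[OF norm_sum] sum_mono)
    fix k
    have "cmod (iexp (t * g k) - iexp (s * g k)) \<le> \<bar>t - s\<bar> * \<bar>g k\<bar>"
      using iexp_lipschitz[of "t * g k" "s * g k"] by (simp add: left_diff_distrib[symmetric] abs_mult)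
    also have "\<dots> \<le> \<bar>t - s\<bar> * (1 + (g k)^2)"
      by (intro mult_left_mono abs_le_one_plus_square) auto
    finally show "norm (w k *\<^sub>R (iexp (t * g k) - iexp (s * g k))) \<le> w k * (\<bar>t - s\<bar> * (1 + (g k)^2))"
      using w_nonneg[of k] by (simp add: mult_left_mono)
  qed
  also have "\<dots> = \<bar>t - s\<bar> * ((\<Sum>k=1..n. (1 + (g k)^2) / real k) / harm n)"
    unfolding w_def harmonic_weights_sum[symmetric] by (simp add: sum_distrib_left ac_simps)
  finally show ?thesis
    by (simp add: w_def)
qed

text \<open>The characteristic functions of the harmonic empirical measures converge to that of the standard
  normal law: on rational t by hypothesis, elsewhere by the Lipschitz bound, whose constant
  converges to 2.\<close>

lemma harmonic_empirical_char_convergence: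
  fixes g :: "nat \<Rightarrow> real"
  assumes cos: "\<And>s. s \<in> \<rat> \<Longrightarrow> (\<lambda>n. (\<Sum>k=1..n. cos (s * g k) / real k) / harm n) \<longlonglongrightarrow> exp (- (s^2) / 2)"
    and sin: "\<And>s. s \<in> \<rat> \<Longrightarrow> (\<lambda>n. (\<Sum>k=1..n. sin (s * g k) / real k) / harm n) \<longlonglongrightarrow> 0"
    and square: "(\<lambda>n. (\<Sum>k=1..n. (g k)^2 / real k) / harm n) \<longlonglongrightarrow> 1"
  shows "(\<lambda>n. char (distr (measure_pmf (harmonic_pmf n)) borel g) t) \<longlonglongrightarrow> char std_normal_distribution t"
proof -
  define c where "c n s = (\<Sum>k=1..n. (1 / (real k * harm n)) *\<^sub>R iexp (s * g k))" for n s
  define B where "B n = (\<Sum>k=1..n. (1 + (g k)^2) / real k) / harm n" for n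
  have char_eq: "\<forall>\<^sub>F n in sequentially. char (distr (measure_pmf (harmonic_pmf n)) borel g) t = c n t"
    using eventually_ge_at_top[of 1]
    by eventually_elim (simp add: char_def c_def integral_harmonic_empirical)
  have "Re (c n s) = (\<Sum>k=1..n. cos (s * g k) / real k) / harm n"
    and "Im (c n s) = (\<Sum>k=1..n. sin (s * g k) / real k) / harm n" for n s
    unfolding c_def harmonic_weights_sum[symmetric] cis_conv_exp[symmetric] by simp_all
  then have rational: "(\<lambda>n. c n s) \<longlonglongrightarrow> char std_normal_distribution s" if "s \<in> \<rat>" for s
    using cos[OF that] sin[OF that] by (simp add: tendsto_complex_iff char_std_normal_distribution)
  have lipschitz: "norm (c n t - c n s) \<le> \<bar>t - s\<bar> * B n" for n t s
    unfolding c_def B_def by (rule harmonic_iexp_sum_lipschitz)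
  have "B \<longlonglongrightarrow> 1 + 1"
    unfolding B_def by (rule harmonic_average_shift[OF square])
  then have "\<forall>\<^sub>F n in sequentially. B n < 3"
    by (rule order_tendstoD(2)) simp
  then have "\<forall>\<^sub>F n in sequentially. B n \<le> 3"
    by (rule eventually_mono) simp
  moreover have "continuous_on UNIV (char std_normal_distribution)"
    unfolding char_std_normal_distribution by (intro continuous_intros) auto
  ultimately have "(\<lambda>n. c n t) \<longlonglongrightarrow> char std_normal_distribution t"
    using tendsto_from_rationals[OF lipschitz _ rational] by blast
  then show ?thesis
    using tendsto_cong[OF char_eq] by simp
qed

text \<open>By the Levy continuity theorem, the harmonic empirical measures converge weakly to the standard
  normal law, which gives convergence of the averages of every bounded continuous function.\<close>

lemma log_average_from_trigonometric:
  fixes g :: "nat \<Rightarrow> real" and \<phi> :: "real \<Rightarrow> real"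
  assumes cos: "\<And>s. s \<in> \<rat> \<Longrightarrow>
      (\<lambda>n. (1 / ln (real n)) * (\<Sum>k=1..n. cos (s * g k) / real k)) \<longlonglongrightarrow> exp (- (s^2) / 2)"
    and sin: "\<And>s. s \<in> \<rat> \<Longrightarrow> (\<lambda>n. (1 / ln (real n)) * (\<Sum>k=1..n. sin (s * g k) / real k)) \<longlonglongrightarrow> 0"
    and square: "(\<lambda>n. (1 / ln (real n)) * (\<Sum>k=1..n. (g k)^2 / real k)) \<longlonglongrightarrow> 1"
    and \<phi>: "continuous_on UNIV \<phi>" "bounded (range \<phi>)"
  shows "(\<lambda>n. (1 / ln (real n)) * (\<Sum>k=1..n. \<phi> (g k) / real k)) \<longlonglongrightarrow> integral\<^sup>L std_normal_distribution \<phi>"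
proof -
  define \<mu> where "\<mu> n = distr (measure_pmf (harmonic_pmf n)) borel g" for n
  have \<mu>: "real_distribution (\<mu> n)" for n
    unfolding \<mu>_def by (intro prob_space.real_distribution_distr prob_space_measure_pmf) simp
  have "weak_conv_m \<mu> std_normal_distribution"
    using cos sin square unfolding \<mu>_def log_average_iff_harmonic_average
    by (intro levy_continuity[OF \<mu>[unfolded \<mu>_def] real_dist_normal_dist] harmonic_empirical_char_convergence)
  moreover obtain K where "\<And>x. norm (\<phi> x) \<le> K"
    using \<phi>(2) unfolding bounded_iff by auto
  ultimately have "(\<lambda>n. integral\<^sup>L (\<mu> n) \<phi>) \<longlonglongrightarrow> integral\<^sup>L std_normal_distribution \<phi>"
    using \<phi>(1) \<mu> real_dist_normal_dist weak_conv_imp_integral_bdd_continuous_conv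
    by (metis continuous_on_eq_continuous_at open_UNIV UNIV_I)
  moreover have "\<forall>\<^sub>F n in sequentially. integral\<^sup>L (\<mu> n) \<phi> = (\<Sum>k=1..n. \<phi> (g k) / real k) / harm n"
    using eventually_ge_at_top[of 1]
  proof eventually_elim
    case (elim n)
    then have "integral\<^sup>L (\<mu> n) \<phi> = (\<Sum>k=1..n. (1 / (real k * harm n)) * \<phi> (g k))"
      unfolding \<mu>_def using borel_measurable_continuous_onI[OF \<phi>(1)]
      by (subst integral_harmonic_empirical) auto
    then show ?case
      by (simp only: harmonic_weights_sum)
  qed
  ultimately show ?thesis
    unfolding log_average_iff_harmonic_average using tendsto_cong by fastforce
qed

text \<open>The main theorem: almost surely the three hypotheses of log_average_from_trigonometric hold,
  using countability of the rationals to exchange the quantifier over t with almost sure.\<close>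

theorem mainTheorem5:
  fixes M :: "'a measure" and G :: "nat \<Rightarrow> 'a \<Rightarrow> real"
  assumes "prob_space M"
    and "jointly_gaussian M G"
    and "\<forall>n\<ge>1. integral\<^sup>L M (G n) = 0"
    and "\<forall>n\<ge>1. integral\<^sup>L M (\<lambda>x. (G n x)\<^sup>2) = 1"
    and "summable (\<lambda>n::nat. if n \<ge> 2 then
            1 / (real n * (ln (real n)) ^ 3) *
            (\<Sum>k=1..n. \<Sum>l=1..n. \<bar>integral\<^sup>L M (\<lambda>x. G k x * G l x)\<bar> / (real k * real l))
          else 0)"
  shows "AE \<omega> in M. \<forall>\<phi> :: real \<Rightarrow> real. continuous_on UNIV \<phi> \<and> bounded (range \<phi>) \<longrightarrow>
           ((\<lambda>n. (1 / ln (real n)) * (\<Sum>k=1..n. \<phi> (G k \<omega>) / real k))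
              \<longlonglongrightarrow> integral\<^sup>L std_normal_distribution \<phi>)"
proof -
  interpret log_summable_gaussian_sequence M G
    using assms by (intro log_summable_gaussian_sequenceI) auto
  have "AE \<omega> in M. \<forall>t\<in>\<rat>. (\<lambda>n. (1 / ln (real n)) * (\<Sum>k=1..n. cos (t * G k \<omega>) / real k))
      \<longlonglongrightarrow> exp (- (t^2) / 2)"
    using AE_log_average_cos by (subst AE_ball_countable) (auto intro: countable_rat)
  moreover have "AE \<omega> in M. \<forall>t\<in>\<rat>. (\<lambda>n. (1 / ln (real n)) * (\<Sum>k=1..n. sin (t * G k \<omega>) / real k))
      \<longlonglongrightarrow> 0"
    using AE_log_average_sin by (subst AE_ball_countable) (auto intro: countable_rat)
  ultimately show ?thesis
    using AE_log_average_square
  proof eventually_elim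
    case (elim \<omega>)
    show ?case
    proof (intro allI impI)
      fix \<phi> :: "real \<Rightarrow> real"
      assume "continuous_on UNIV \<phi> \<and> bounded (range \<phi>)"
      then show "(\<lambda>n. (1 / ln (real n)) * (\<Sum>k=1..n. \<phi> (G k \<omega>) / real k))
          \<longlonglongrightarrow> integral\<^sup>L std_normal_distribution \<phi>"
        using elim by (intro log_average_from_trigonometric[where g = "\<lambda>k. G k \<omega>"]) auto
    qed
  qed
qed

end
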